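(* Let $X$ be a compact Hausdorff space, $A=C(X)$, and $H_A=l_2(A)$. Let $F\in H''_A$ and let $(F_1,F_2,\dots)\in H'_A$ be the sequence representing $F$, i.e. $F_i=F(\hat e_i)^*$. Let $\Phi:X\to[0,\infty)$ be the point-wise limit $\Phi(x)=\sum_{i=1}^\infty \overline{F_i(x)}F_i(x)$, and let $E\subseteq X$ be the set of points at which $\Phi$ is continuous. Then for every $x_0\in E$ and every $f=(f_1,f_2,\dots)\in H'_A$, the series $\sum_{i=1}^\infty \overline{F_i(x_0)}f_i(x_0)$ converges and its sum equals $F(f)(x_0)$, the value at $x_0$ of the continuous function $F(f)\in C(X)$.
   Context: $H_A=l_2(A)$ is the set of sequences $(a_1,a_2,\dots)$ in $A$ with $\sum_i a_i^*a_i$ norm convergent; it is a right Hilbert $A$-module with componentwise action and inner product $\langle a,b\rangle=\sum_i a_i^*b_i$. Its standard basis vectors are $e_i$ ($1$ in place $i$, $0$ elsewhere). The dual $H'_A$ is the set of bounded $A$-linear maps $H_A\to A$; for $A=C(X)$ it is identified (via $f\mapsto (f(e_i)^* )_i$, so that $f(x)=\sum_i f_i^*x_i$) with the set of sequences $(f_1,f_2,\dots)$, $f_i\in C(X)$, with $\sup_N\|\sum_{i=1}^N \overline{f_i}f_i\|<\infty$ (sup norm), the norm being $\|f\|^2=\sup_N\|\sum_{i=1}^N\overline{f_i}f_i\|$, and the right $A$-module structure being componentwise multiplication. The second dual $H''_A$ is the set of bounded $A$-linear maps $H'_A\to A$. For $i\ge1$, $\hat e_i\in H'_A$ denotes the sequence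 with $1$ in place $i$ and $0$ elsewhere (the image of $e_i$ under $m\mapsto\hat m$, $\hat m(x)=\langle m,x\rangle$). Each $F\in H''_A$ is represented by the sequence $(F_i)$, $F_i=F(\hat e_i)^*$; this is the canonical isometric embedding $H''_A\subseteq H'_A$. *)

theory Defs
  imports "HOL-Analysis.Analysis"
begin

text \<open>A = C(X): complex-valued continuous functions on the compact Hausdorff space X
(here the type 'a with the topology of its type class).
Elements of the dual H'_A are represented as sequences f :: nat => 'a => complex.\<close>

definition dual_seq :: "(nat \<Rightarrow> 'a::topological_space \<Rightarrow> complex) \<Rightarrow> bool" where
  "dual_seq f \<longleftrightarrow> (\<forall>i. continuous_on UNIV (f i)) \<and>
     (\<exists>B. \<forall>N x. (\<Sum>i<N. (cmod (f i x))\<^sup>2) \<le> B)"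

definition dual_norm :: "(nat \<Rightarrow> 'a::topological_space \<Rightarrow> complex) \<Rightarrow> real" where
  "dual_norm f = sqrt (SUP N. SUP x. (\<Sum>i<N. (cmod (f i x))\<^sup>2))"

text \<open>Second dual: bounded A-linear maps H'_A -> A = C(X)
(right module structure: componentwise multiplication).\<close>
definition bidual :: "((nat \<Rightarrow> 'a::topological_space \<Rightarrow> complex) \<Rightarrow> ('a \<Rightarrow> complex)) \<Rightarrow> bool" where
  "bidual F \<longleftrightarrow>
     (\<forall>f. dual_seq f \<longrightarrow> continuous_on UNIV (F f)) \<and>
     (\<forall>f g. dual_seq f \<longrightarrow> dual_seq g \<longrightarrow>
        F (\<lambda>i x. f i x + g i x) = (\<lambda>x. F f x + F g x)) \<and>
     (\<forall>f a. dual_seq f \<longrightarrow> continuous_on UNIV a \<longrightarrow>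
        F (\<lambda>i x. f i x * a x) = (\<lambda>x. F f x * a x)) \<and>
     (\<exists>K. \<forall>f. dual_seq f \<longrightarrow> (\<forall>x. cmod (F f x) \<le> K * dual_norm f))"

definition hat_e :: "nat \<Rightarrow> nat \<Rightarrow> 'a \<Rightarrow> complex" where
  "hat_e i = (\<lambda>j x. if j = i then 1 else 0)"

definition rep_seq :: "((nat \<Rightarrow> 'a \<Rightarrow> complex) \<Rightarrow> ('a \<Rightarrow> complex)) \<Rightarrow> nat \<Rightarrow> 'a \<Rightarrow> complex" where
  "rep_seq F i = (\<lambda>x. cnj (F (hat_e i) x))"

end

theory Submission
  imports Defs
begin

(* Split F f = (SUM i<M. F(e_i) f_i) + F(f^M), where f^M is f with its first M entries set to 0;
   it suffices that F(f^M)(x0) tends to 0.  Continuity of Phi at x0 makes the tails of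
   SUM |F(e_i)|^2 uniformly small on a neighbourhood U of x0, so by Cauchy-Schwarz the blocks
   SUM M<=i<L. F(e_i) f_i are uniformly small on U.  If |F(f^M)| exceeded gamma at x0, it would do
   so on an open V inside U.  Choose y in V almost maximising the partial sums of SUM |f_i|^2 over V;
   then near y all tails of that series beyond some L are small.  Multiplying f^L by an Urysohn
   bump at y does not change F(f^L)(y) but makes the norm small, so F(f^M)(y), which is a block
   plus F(f^L)(y), is small: a contradiction. *)

definition seq_upto :: "nat \<Rightarrow> (nat \<Rightarrow> 'a \<Rightarrow> complex) \<Rightarrow> nat \<Rightarrow> 'a \<Rightarrow> complex" where
  "seq_upto M f = (\<lambda>i x. if i < M then f i x else 0)"

definition seq_from :: "nat \<Rightarrow> (nat \<Rightarrow> 'a \<Rightarrow> complex) \<Rightarrow> nat \<Rightarrow> 'a \<Rightarrow> complex" where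
  "seq_from M f = (\<lambda>i x. if i < M then 0 else f i x)"

definition bidual_bounded_by ::
    "((nat \<Rightarrow> 'a::topological_space \<Rightarrow> complex) \<Rightarrow> ('a \<Rightarrow> complex)) \<Rightarrow> real \<Rightarrow> bool" where
  "bidual_bounded_by F K \<longleftrightarrow> 0 \<le> K \<and> (\<forall>f x. dual_seq f \<longrightarrow> cmod (F f x) \<le> K * dual_norm f)"

lemma dual_seq_continuous: "dual_seq f \<Longrightarrow> continuous_on UNIV (f i)"
  by (simp add: dual_seq_def)

lemma dual_seq_boundE:
  assumes "dual_seq f"
  obtains B :: real where "0 \<le> B" "\<And>N x. (\<Sum>i<N. (cmod (f i x))\<^sup>2) \<le> B"
proof -
  obtain B where "\<And>N x. (\<Sum>i<N. (cmod (f i x))\<^sup>2) \<le> B"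
    using assms unfolding dual_seq_def by blast
  moreover from this[where N = 0] have "0 \<le> B" by simp
  ultimately show ?thesis using that by blast
qed

lemma dual_seq_dominated:
  assumes "dual_seq f" "\<And>i. continuous_on UNIV (g i)" "\<And>i x. cmod (g i x) \<le> cmod (f i x)"
  shows "dual_seq g"
proof -
  obtain B where B: "\<And>N x. (\<Sum>i<N. (cmod (f i x))\<^sup>2) \<le> B"
    using dual_seq_boundE[OF assms(1)] by blast
  have "(\<Sum>i<N. (cmod (g i x))\<^sup>2) \<le> B" for N x
    by (rule order_trans[OF sum_mono B]) (use assms(3) in \<open>auto intro: power_mono\<close>)
  then show ?thesis using assms(2) unfolding dual_seq_def by blast
qed

lemma dual_seq_hat_e: "dual_seq (hat_e i)"
proof -
  have e: "(cmod (hat_e i j x))\<^sup>2 = (if j = i then 1 else 0)" for j x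
    by (simp add: hat_e_def)
  have "(\<Sum>j<N. (cmod (hat_e i j x))\<^sup>2) \<le> 1" for N x
    unfolding e by simp
  then show ?thesis unfolding dual_seq_def by (auto simp: hat_e_def)
qed

lemma dual_seq_seq_upto:
  assumes "dual_seq f" shows "dual_seq (seq_upto M f)"
proof (rule dual_seq_dominated[OF assms])
  show "continuous_on UNIV (seq_upto M f i)" for i
    using dual_seq_continuous[OF assms] by (cases "i < M") (auto simp: seq_upto_def)
qed (simp add: seq_upto_def)

lemma dual_seq_seq_from:
  assumes "dual_seq f" shows "dual_seq (seq_from M f)"
proof (rule dual_seq_dominated[OF assms])
  show "continuous_on UNIV (seq_from M f i)" for i
    using dual_seq_continuous[OF assms] by (cases "i < M") (auto simp: seq_from_def)
qed (simp add: seq_from_def)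

lemma sum_sq_seq_from:
  "(\<Sum>i<N. (cmod (seq_from L f i z))\<^sup>2) = (\<Sum>i\<in>{L..<N}. (cmod (f i z))\<^sup>2)"
proof -
  have "(\<Sum>i<N. (cmod (seq_from L f i z))\<^sup>2) = (\<Sum>i<N. if i \<in> {i. L \<le> i} then (cmod (f i z))\<^sup>2 else 0)"
    by (intro sum.cong) (auto simp: seq_from_def)
  also have "\<dots> = (\<Sum>i\<in>{..<N} \<inter> {i. L \<le> i}. (cmod (f i z))\<^sup>2)"
    by (rule sum.inter_restrict[symmetric]) simp
  also have "{..<N} \<inter> {i. L \<le> i} = {L..<N}" by auto
  finally show ?thesis .
qed

lemma dual_norm_le_sqrt:
  assumes "\<And>N x. (\<Sum>i<N. (cmod (f i x))\<^sup>2) \<le> \<delta>"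
  shows "dual_norm f \<le> sqrt \<delta>"
  unfolding dual_norm_def
  by (intro real_sqrt_le_mono cSUP_least assms) simp_all

lemma dual_norm_nonneg:
  assumes "dual_seq f" shows "0 \<le> dual_norm f"
proof -
  obtain B where B: "\<And>N x. (\<Sum>i<N. (cmod (f i x))\<^sup>2) \<le> B"
    using dual_seq_boundE[OF assms] by blast
  have "bdd_above (range (\<lambda>N. SUP x. (\<Sum>i<N. (cmod (f i x))\<^sup>2)))"
    by (intro bdd_aboveI2[where M = B] cSUP_least B) simp
  from cSUP_upper[OF UNIV_I this, of 0] show ?thesis
    unfolding dual_norm_def by simp
qed

lemma bidual_continuous: "bidual F \<Longrightarrow> dual_seq f \<Longrightarrow> continuous_on UNIV (F f)"
  unfolding bidual_def by blast

lemma bidual_add: "bidual F \<Longrightarrow> dual_seq f \<Longrightarrow> dual_seq g \<Longrightarrow>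
    F (\<lambda>i x. f i x + g i x) = (\<lambda>x. F f x + F g x)"
  unfolding bidual_def by blast

lemma bidual_mult: "bidual F \<Longrightarrow> dual_seq f \<Longrightarrow> continuous_on UNIV a \<Longrightarrow>
    F (\<lambda>i x. f i x * a x) = (\<lambda>x. F f x * a x)"
  unfolding bidual_def by blast

lemma bidual_bounded_byE:
  assumes "bidual F"
  obtains K where "bidual_bounded_by F K"
proof -
  obtain K where K: "\<And>f x. dual_seq f \<Longrightarrow> cmod (F f x) \<le> K * dual_norm f"
    using assms unfolding bidual_def by blast
  have "cmod (F f x) \<le> \<bar>K\<bar> * dual_norm f" if "dual_seq f" for f x
    using K[OF that, of x] mult_right_mono[OF abs_ge_self dual_norm_nonneg[OF that], of K]
    by linarith
  then show ?thesis using that[of "\<bar>K\<bar>"] unfolding bidual_bounded_by_def by simp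
qed

lemma bidual_bounded_byD:
  "bidual_bounded_by F K \<Longrightarrow> dual_seq f \<Longrightarrow> cmod (F f x) \<le> K * dual_norm f"
  unfolding bidual_bounded_by_def by blast

lemma bidual_zero: "bidual F \<Longrightarrow> F (\<lambda>i x. 0) = (\<lambda>x. 0)"
  using bidual_mult[of F "\<lambda>i x. 0" "\<lambda>x. 0"] unfolding dual_seq_def by force

lemma bidual_seq_upto:
  assumes "bidual F" "dual_seq f"
  shows "F (seq_upto M f) = (\<lambda>x. \<Sum>i<M. F (hat_e i) x * f i x)"
proof (induction M)
  case 0
  have "seq_upto 0 f = (\<lambda>i x. 0)" by (simp add: seq_upto_def)
  then show ?case using bidual_zero[OF assms(1)] by simp
next
  case (Suc M)
  have cf: "continuous_on UNIV (f M)" using assms(2) by (rule dual_seq_continuous)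
  have step: "dual_seq (\<lambda>i x. hat_e M i x * f M x)"
    by (rule dual_seq_dominated[OF assms(2)]) (auto simp: hat_e_def cf)
  have "seq_upto (Suc M) f = (\<lambda>i x. seq_upto M f i x + hat_e M i x * f M x)"
    by (auto simp: seq_upto_def hat_e_def fun_eq_iff)
  then have "F (seq_upto (Suc M) f) = (\<lambda>x. F (seq_upto M f) x + F (hat_e M) x * f M x)"
    using bidual_add[OF assms(1) dual_seq_seq_upto[OF assms(2)] step]
      bidual_mult[OF assms(1) dual_seq_hat_e cf] by simp
  then show ?case using Suc by simp
qed

lemma bidual_split:
  assumes "bidual F" "dual_seq f"
  shows "F f x = (\<Sum>i<M. F (hat_e i) x * f i x) + F (seq_from M f) x"
proof -
  have "f = (\<lambda>i x. seq_upto M f i x + seq_from M f i x)"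
    by (auto simp: seq_upto_def seq_from_def fun_eq_iff)
  then have "F f = (\<lambda>x. F (seq_upto M f) x + F (seq_from M f) x)"
    by (metis bidual_add[OF assms(1) dual_seq_seq_upto[OF assms(2)] dual_seq_seq_from[OF assms(2)]])
  then show ?thesis using bidual_seq_upto[OF assms] by simp
qed

lemma bidual_seq_from_split:
  assumes "bidual F" "dual_seq f" "M \<le> L"
  shows "F (seq_from M f) x = (\<Sum>i\<in>{M..<L}. F (hat_e i) x * f i x) + F (seq_from L f) x"
proof -
  have "(\<Sum>i<L. F (hat_e i) x * f i x) = (\<Sum>i<M. F (hat_e i) x * f i x) + (\<Sum>i\<in>{M..<L}. F (hat_e i) x * f i x)"
    using sum.atLeastLessThan_concat[of 0 M L "\<lambda>i. F (hat_e i) x * f i x"] assms(3)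
    by (simp add: lessThan_atLeast0)
  then show ?thesis using bidual_split[OF assms(1,2), of x M] bidual_split[OF assms(1,2), of x L]
    by simp
qed

lemma Urysohn_bump:
  fixes W :: "'a::t2_space set"
  assumes "compact (UNIV :: 'a set)" "open W" "y \<in> W"
  obtains b :: "'a \<Rightarrow> real"
  where "continuous_on UNIV b" "b y = 1" "\<And>x. 0 \<le> b x \<and> b x \<le> 1" "\<And>x. x \<notin> W \<Longrightarrow> b x = 0"
proof -
  have "compact_space (euclidean :: 'a topology)"
    using assms(1) unfolding compact_space_def by simp
  moreover have "Hausdorff_space (euclidean :: 'a topology)"
    unfolding Hausdorff_space_def disjnt_def by (metis open_openin separation_t2)
  ultimately have "completely_regular_space (euclidean :: 'a topology)"
    by (meson compact_Hausdorff_or_regular_imp_normal_space normal_imp_completely_regular_space)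
  moreover have "closedin euclidean (- W)" using assms(2) by (simp add: closed_Compl flip: closed_closedin)
  ultimately obtain f :: "'a \<Rightarrow> real"
    where f: "continuous_map euclidean (top_of_set {0..1}) f" "f y = 0" "f ` (- W) \<subseteq> {1}"
    using assms(3) unfolding completely_regular_space_def by (metis Diff_iff UNIV_I double_complement topspace_euclidean ComplD)
  then have "continuous_on UNIV f" "\<And>x. f x \<in> {0..1}"
    by (auto simp: continuous_map_in_subtopology)
  then show ?thesis
    using f(2,3) by (intro that[of "\<lambda>x. 1 - f x"]) (auto intro: continuous_intros)
qed

lemma norm_sum_mult_le_sqrt:
  fixes a b :: "'i \<Rightarrow> 'b::real_normed_div_algebra"
  shows "norm (\<Sum>i\<in>I. a i * b i) \<le> sqrt (\<Sum>i\<in>I. (norm (a i))\<^sup>2) * sqrt (\<Sum>i\<in>I. (norm (b i))\<^sup>2)"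
proof -
  have "norm (\<Sum>i\<in>I. a i * b i) \<le> (\<Sum>i\<in>I. norm (a i) * norm (b i))"
    by (rule order_trans[OF norm_sum]) (simp add: norm_mult)
  also have "\<dots> \<le> sqrt ((\<Sum>i\<in>I. (norm (a i))\<^sup>2) * (\<Sum>i\<in>I. (norm (b i))\<^sup>2))"
    by (intro real_le_rsqrt Cauchy_Schwarz_ineq_sum)
  finally show ?thesis by (simp add: real_sqrt_mult)
qed

lemma tails_small_near_continuity_point:
  fixes \<phi> :: "nat \<Rightarrow> 'a::t2_space \<Rightarrow> real"
  assumes nonneg: "\<And>i x. 0 \<le> \<phi> i x" and cont: "\<And>i. continuous_on UNIV (\<phi> i)"
    and summable: "\<And>x. summable (\<lambda>i. \<phi> i x)"
    and "isCont (\<lambda>x. \<Sum>i. \<phi> i x) x0" "0 < \<epsilon>"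
  obtains N U where "open U" "x0 \<in> U"
    "\<And>y M L. y \<in> U \<Longrightarrow> N \<le> M \<Longrightarrow> (\<Sum>i\<in>{M..<L}. \<phi> i y) \<le> \<epsilon>"
proof -
  define \<Phi> where "\<Phi> x = (\<Sum>i. \<phi> i x)" for x
  obtain N where N: "norm ((\<Sum>i<N. \<phi> i x0) - \<Phi> x0) < \<epsilon>"
    using LIMSEQ_D[OF summable_LIMSEQ[OF summable[of x0]] assms(5)] unfolding \<Phi>_def
    by (meson order_refl)
  define \<psi> where "\<psi> x = \<Phi> x - (\<Sum>i<N. \<phi> i x)" for x
  have "isCont \<psi> x0"
    unfolding \<psi>_def \<Phi>_def using assms(4) cont
    by (intro isCont_diff isCont_sum) (auto simp: continuous_on_eq_continuous_at)
  moreover have "\<psi> x0 < \<epsilon>" using N unfolding \<psi>_def by simp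
  ultimately have "eventually (\<lambda>y. \<psi> y < \<epsilon>) (nhds x0)"
    by (auto simp: isCont_def tendsto_at_iff_tendsto_nhds dest: order_tendstoD(2))
  then obtain U where U: "open U" "x0 \<in> U" "\<And>y. y \<in> U \<Longrightarrow> \<psi> y < \<epsilon>"
    unfolding eventually_nhds by blast
  have "(\<Sum>i\<in>{M..<L}. \<phi> i y) \<le> \<epsilon>" if "y \<in> U" "N \<le> M" for y M L
  proof -
    have "(\<Sum>i\<in>{M..<L}. \<phi> i y) \<le> (\<Sum>i\<in>{N..<max L N}. \<phi> i y)"
      using that(2) nonneg by (intro sum_mono2) auto
    also have "\<dots> = (\<Sum>i<max L N. \<phi> i y) - (\<Sum>i<N. \<phi> i y)"
      using sum.atLeastLessThan_concat[of 0 N "max L N" "\<lambda>i. \<phi> i y"]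
      by (simp add: lessThan_atLeast0)
    also have "\<dots> \<le> \<psi> y"
      unfolding \<psi>_def \<Phi>_def using sum_le_suminf[OF summable] nonneg by simp
    finally show ?thesis using U(3)[OF that(1)] by simp
  qed
  with U(1,2) show ?thesis by (rule that)
qed

lemma bidual_hat_e_sum_sq_le:
  fixes F :: "(nat \<Rightarrow> 'a::topological_space \<Rightarrow> complex) \<Rightarrow> ('a \<Rightarrow> complex)"
  assumes "bidual F" "bidual_bounded_by F K" "compact (UNIV :: 'a set)"
  shows "(\<Sum>i<N. (cmod (F (hat_e i) x))\<^sup>2) \<le> K\<^sup>2"
proof -
  define s where "s z = (\<Sum>i<N. (cmod (F (hat_e i) z))\<^sup>2)" for z
  have cF: "continuous_on UNIV (F (hat_e i))" for i
    by (rule bidual_continuous[OF assms(1) dual_seq_hat_e])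
  have "continuous_on UNIV s"
    unfolding s_def by (intro continuous_intros cF)
  then obtain y where y: "\<And>z. s z \<le> s y"
    using continuous_attains_sup[of UNIV s] assms(3) by auto
  have s0: "0 \<le> s y" unfolding s_def by (simp add: sum_nonneg)
  (* Test F on the truncation w of its own representing sequence: F w = s,
     while the norm of w is at most sqrt (s y) for the maximum point y of s. *)
  define w where "w = seq_upto N (\<lambda>i z. cnj (F (hat_e i) z))"
  have w_sum_le: "(\<Sum>i<M. (cmod (w i z))\<^sup>2) \<le> s y" for M z
  proof -
    have "(\<Sum>i<M. (cmod (w i z))\<^sup>2) = (\<Sum>i<M. if i < N then (cmod (F (hat_e i) z))\<^sup>2 else 0)"
      unfolding w_def seq_upto_def by (intro sum.cong) auto
    also have "\<dots> = (\<Sum>i\<in>{..<M} \<inter> {..<N}. (cmod (F (hat_e i) z))\<^sup>2)"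
      by (simp add: sum.inter_restrict)
    also have "\<dots> \<le> s z" unfolding s_def by (intro sum_mono2) auto
    finally show ?thesis using y[of z] by linarith
  qed
  have "continuous_on UNIV (w i)" for i
    unfolding w_def seq_upto_def by (cases "i < N") (auto intro: continuous_on_cnj cF)
  with w_sum_le have w: "dual_seq w" unfolding dual_seq_def by blast
  have "seq_upto N w = w" unfolding w_def seq_upto_def by (simp add: fun_eq_iff)
  then have "F w y = (\<Sum>i<N. F (hat_e i) y * w i y)"
    using bidual_seq_upto[OF assms(1) w, of N] by metis
  also have "\<dots> = (\<Sum>i<N. F (hat_e i) y * cnj (F (hat_e i) y))"
    by (simp add: w_def seq_upto_def)
  also have "\<dots> = complex_of_real (s y)"
    unfolding s_def of_real_sum by (simp only: complex_norm_square)
  finally have "s y \<le> K * dual_norm w"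
    using bidual_bounded_byD[OF assms(2) w, of y] s0 by simp
  also have "\<dots> \<le> K * sqrt (s y)"
    using dual_norm_le_sqrt[of w, OF w_sum_le] assms(2)
    by (simp add: bidual_bounded_by_def mult_left_mono)
  finally have "s y \<le> K\<^sup>2"
    using s0 assms(2) unfolding bidual_bounded_by_def
    by (smt (verit, best) mult_right_cancel mult_right_mono power2_eq_square real_sqrt_le_iff' real_sqrt_pow2)
  then show ?thesis using y[of x] unfolding s_def by linarith
qed

lemma bidual_local_bound:
  fixes F :: "(nat \<Rightarrow> 'a::t2_space \<Rightarrow> complex) \<Rightarrow> ('a \<Rightarrow> complex)"
  assumes "bidual F" "bidual_bounded_by F K" "compact (UNIV :: 'a set)" "dual_seq g"
    and "open W" "y \<in> W" and small: "\<And>z N. z \<in> W \<Longrightarrow> (\<Sum>i<N. (cmod (g i z))\<^sup>2) \<le> \<delta>"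
  shows "cmod (F g y) \<le> K * sqrt \<delta>"
proof -
  obtain b :: "'a \<Rightarrow> real" where b: "continuous_on UNIV b" "b y = 1" "\<And>x. 0 \<le> b x \<and> b x \<le> 1"
    "\<And>x. x \<notin> W \<Longrightarrow> b x = 0"
    using Urysohn_bump[OF assms(3,5,6)] by blast
  have cb: "continuous_on UNIV (\<lambda>x. complex_of_real (b x))"
    using b(1) by (intro continuous_intros)
  (* By A-linearity the bump leaves the value at y unchanged but localises the norm to W. *)
  define h where "h i x = g i x * complex_of_real (b x)" for i x
  have h: "dual_seq h"
  proof (rule dual_seq_dominated[OF assms(4)])
    show "continuous_on UNIV (h i)" for i
      unfolding h_def using dual_seq_continuous[OF assms(4)] cb by (rule continuous_on_mult)
    show "cmod (h i x) \<le> cmod (g i x)" for i x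
      unfolding h_def norm_mult using b(3)[of x] by (intro mult_left_le) auto
  qed
  have "F h = (\<lambda>x. F g x * complex_of_real (b x))"
    unfolding h_def by (rule bidual_mult[OF assms(1,4) cb])
  then have "F g y = F h y" using b(2) by simp
  have \<delta>: "0 \<le> \<delta>" using small[OF assms(6), of 0] by simp
  have "(\<Sum>i<N. (cmod (h i z))\<^sup>2) \<le> \<delta>" for N z
  proof (cases "z \<in> W")
    case True
    have "(\<Sum>i<N. (cmod (h i z))\<^sup>2) = (b z)\<^sup>2 * (\<Sum>i<N. (cmod (g i z))\<^sup>2)"
      by (simp add: h_def norm_mult power_mult_distrib sum_distrib_left mult.commute)
    also have "\<dots> \<le> 1 * \<delta>"
      using b(3)[of z] small[OF True, of N]
      by (intro mult_mono) (auto simp: power_le_one sum_nonneg)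
    finally show ?thesis by simp
  qed (use b(4) \<delta> in \<open>simp add: h_def\<close>)
  then have "dual_norm h \<le> sqrt \<delta>" by (rule dual_norm_le_sqrt)
  then show ?thesis
    using \<open>F g y = F h y\<close> bidual_bounded_byD[OF assms(2) h, of y] assms(2)
    by (metis bidual_bounded_by_def mult_left_mono order_trans)
qed

lemma dual_seq_tails_small_on_open:
  assumes "dual_seq f" "open V" "x \<in> V" "0 < \<delta>"
  obtains W y L0 where "open W" "y \<in> W" "W \<subseteq> V"
    "\<And>z L P. z \<in> W \<Longrightarrow> L0 \<le> L \<Longrightarrow> (\<Sum>i\<in>{L..<P}. (cmod (f i z))\<^sup>2) \<le> \<delta>"
proof -
  obtain B where B: "\<And>N x. (\<Sum>i<N. (cmod (f i x))\<^sup>2) \<le> B"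
    using dual_seq_boundE[OF assms(1)] by metis
  define \<rho> where "\<rho> P z = (\<Sum>i<P. (cmod (f i z))\<^sup>2)" for P z
  have cont: "continuous_on UNIV (\<rho> P)" for P
    unfolding \<rho>_def using dual_seq_continuous[OF assms(1)] by (intro continuous_intros)
  define S where "S = {\<rho> P z | P z. z \<in> V}"
  have S: "S \<noteq> {}" "bdd_above S"
    unfolding S_def \<rho>_def using assms(3) B by (auto intro: bdd_aboveI[where M = B])
  (* Partial sums only grow with P, so near a point almost attaining Sup S every tail beyond P1 is
     below \<delta>. *)
  obtain P1 y where y: "y \<in> V" "Sup S - \<delta> < \<rho> P1 y"
    using less_cSupD[OF S(1), of "Sup S - \<delta>"] assms(4) unfolding S_def by auto
  define W where "W = V \<inter> {z. Sup S - \<delta> < \<rho> P1 z}"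
  have "open W"
    unfolding W_def using assms(2) cont by (intro open_Int open_Collect_less continuous_intros) auto
  moreover have "(\<Sum>i\<in>{L..<P}. (cmod (f i z))\<^sup>2) \<le> \<delta>" if "z \<in> W" "P1 \<le> L" for z L P
  proof -
    have "(\<Sum>i\<in>{L..<P}. (cmod (f i z))\<^sup>2) \<le> (\<Sum>i\<in>{L..<max P L}. (cmod (f i z))\<^sup>2)"
      by (intro sum_mono2) auto
    also have "\<dots> = \<rho> (max P L) z - \<rho> L z"
      using sum.atLeastLessThan_concat[of 0 L "max P L" "\<lambda>i. (cmod (f i z))\<^sup>2"]
      by (simp add: \<rho>_def lessThan_atLeast0)
    also have "\<rho> (max P L) z \<le> Sup S"
      using that(1) S(2) unfolding W_def S_def by (auto intro: cSup_upper)
    also have "\<rho> P1 z \<le> \<rho> L z"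
      unfolding \<rho>_def using that(2) by (intro sum_mono2) auto
    ultimately show ?thesis using that(1) unfolding W_def by simp
  qed
  ultimately show ?thesis using y by (intro that[of W y P1]) (auto simp: W_def)
qed

lemma bidual_seq_from_le:
  fixes F :: "(nat \<Rightarrow> 'a::t2_space \<Rightarrow> complex) \<Rightarrow> ('a \<Rightarrow> complex)"
  assumes F: "bidual F" "bidual_bounded_by F K" "compact (UNIV :: 'a set)" and f: "dual_seq f"
    and "open U" "x0 \<in> U" "0 < \<gamma>"
    and piece: "\<And>y L. y \<in> U \<Longrightarrow> M \<le> L \<Longrightarrow> cmod (\<Sum>i\<in>{M..<L}. F (hat_e i) y * f i y) \<le> \<gamma> / 2"
  shows "cmod (F (seq_from M f) x0) \<le> \<gamma>"
proof (rule ccontr)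
  have K: "0 \<le> K" using F(2) by (simp add: bidual_bounded_by_def)
  define \<delta> where "\<delta> = (\<gamma> / (2 * (K + 1)))\<^sup>2"
  have "0 < \<delta>" using \<open>0 < \<gamma>\<close> K by (simp add: \<delta>_def)
  define V where "V = U \<inter> {y. \<gamma> < cmod (F (seq_from M f) y)}"
  assume "\<not> ?thesis"
  then have "x0 \<in> V" using assms(6) by (simp add: V_def)
  have "open V"
    unfolding V_def using assms(5) bidual_continuous[OF F(1) dual_seq_seq_from[OF f]]
    by (intro open_Int open_Collect_less continuous_intros) auto
  obtain W y L0 where W: "open W" "y \<in> W" "W \<subseteq> V"
    and tails: "\<And>z L P. z \<in> W \<Longrightarrow> L0 \<le> L \<Longrightarrow> (\<Sum>i\<in>{L..<P}. (cmod (f i z))\<^sup>2) \<le> \<delta>"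
    using dual_seq_tails_small_on_open[OF f \<open>open V\<close> \<open>x0 \<in> V\<close> \<open>0 < \<delta>\<close>] by metis
  define L where "L = max L0 M"
  have "(\<Sum>i<N. (cmod (seq_from L f i z))\<^sup>2) \<le> \<delta>" if "z \<in> W" for z N
    unfolding sum_sq_seq_from using tails[OF that] by (simp add: L_def)
  then have "cmod (F (seq_from L f) y) \<le> K * sqrt \<delta>"
    by (intro bidual_local_bound[OF F dual_seq_seq_from[OF f] W(1,2)])
  also have "sqrt \<delta> = \<gamma> / (2 * (K + 1))"
    using \<open>0 < \<gamma>\<close> K by (simp add: \<delta>_def)
  also have "K * (\<gamma> / (2 * (K + 1))) < \<gamma> / 2"
    using \<open>0 < \<gamma>\<close> K by (simp add: field_simps)
  finally have "cmod (F (seq_from L f) y) < \<gamma> / 2" .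
  moreover have "y \<in> U" "\<gamma> < cmod (F (seq_from M f) y)"
    using W(2,3) by (auto simp: V_def)
  moreover have "F (seq_from M f) y = (\<Sum>i\<in>{M..<L}. F (hat_e i) y * f i y) + F (seq_from L f) y"
    by (rule bidual_seq_from_split[OF F(1) f]) (simp add: L_def)
  ultimately show False
    using piece[of y L] norm_triangle_ineq[of "\<Sum>i\<in>{M..<L}. F (hat_e i) y * f i y" "F (seq_from L f) y"]
    by (simp add: L_def)
qed

lemma bidual_seq_from_tendsto_zero:
  fixes F :: "(nat \<Rightarrow> 'a::t2_space \<Rightarrow> complex) \<Rightarrow> ('a \<Rightarrow> complex)"
  assumes F: "bidual F" "compact (UNIV :: 'a set)" and f: "dual_seq f"
    and cont: "isCont (\<lambda>x. \<Sum>i. (cmod (F (hat_e i) x))\<^sup>2) x0"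
  shows "(\<lambda>M. F (seq_from M f) x0) \<longlonglongrightarrow> 0"
proof (rule LIMSEQ_I)
  fix r :: real assume "0 < r"
  obtain K where K: "bidual_bounded_by F K" using bidual_bounded_byE[OF F(1)] by metis
  obtain B where "0 \<le> B" and B: "\<And>N x. (\<Sum>i<N. (cmod (f i x))\<^sup>2) \<le> B"
    using dual_seq_boundE[OF f] by metis
  have summable: "summable (\<lambda>i. (cmod (F (hat_e i) x))\<^sup>2)" for x
    using bidual_hat_e_sum_sq_le[OF F(1) K F(2)] by (intro summableI_nonneg_bounded) auto
  define \<gamma> where "\<gamma> = r / 2"
  define \<epsilon> where "\<epsilon> = (\<gamma> / 2)\<^sup>2 / (B + 1)"
  have "0 < \<gamma>" "0 < \<epsilon>" using \<open>0 < r\<close> \<open>0 \<le> B\<close> by (simp_all add: \<gamma>_def \<epsilon>_def)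
  have cont_sq: "continuous_on UNIV (\<lambda>x. (cmod (F (hat_e i) x))\<^sup>2)" for i
    using bidual_continuous[OF F(1) dual_seq_hat_e] by (intro continuous_intros)
  obtain N U where U: "open U" "x0 \<in> U"
    and tails: "\<And>y M L. y \<in> U \<Longrightarrow> N \<le> M \<Longrightarrow> (\<Sum>i\<in>{M..<L}. (cmod (F (hat_e i) y))\<^sup>2) \<le> \<epsilon>"
    using tails_small_near_continuity_point[OF zero_le_power2 cont_sq summable cont \<open>0 < \<epsilon>\<close>]
    by metis
  have "cmod (F (seq_from M f) x0) \<le> \<gamma>" if "N \<le> M" for M
  proof (rule bidual_seq_from_le[OF F(1) K F(2) f U \<open>0 < \<gamma>\<close>])
    fix y L assume "y \<in> U"
    have f_tail: "(\<Sum>i\<in>{M..<L}. (cmod (f i y))\<^sup>2) \<le> B"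
      by (rule order_trans[OF sum_mono2 B[where N = L]]) auto
    have "cmod (\<Sum>i\<in>{M..<L}. F (hat_e i) y * f i y)
        \<le> sqrt (\<Sum>i\<in>{M..<L}. (cmod (F (hat_e i) y))\<^sup>2) * sqrt (\<Sum>i\<in>{M..<L}. (cmod (f i y))\<^sup>2)"
      by (rule norm_sum_mult_le_sqrt)
    also have "\<dots> \<le> sqrt \<epsilon> * sqrt (B + 1)"
      using tails[OF \<open>y \<in> U\<close> that] f_tail \<open>0 < \<epsilon>\<close>
      by (intro mult_mono real_sqrt_le_mono) (simp_all add: sum_nonneg)
    also have "\<dots> = \<gamma> / 2"
      using \<open>0 < \<gamma>\<close> \<open>0 \<le> B\<close> by (simp add: \<epsilon>_def real_sqrt_mult[symmetric])
    finally show "cmod (\<Sum>i\<in>{M..<L}. F (hat_e i) y * f i y) \<le> \<gamma> / 2" .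
  qed
  moreover have "\<gamma> < r" using \<open>0 < r\<close> by (simp add: \<gamma>_def)
  ultimately show "\<exists>N. \<forall>M\<ge>N. norm (F (seq_from M f) x0 - 0) < r"
    by (metis diff_zero order_le_less_trans)
qed

lemma bidual_sums:
  fixes F :: "(nat \<Rightarrow> 'a::t2_space \<Rightarrow> complex) \<Rightarrow> ('a \<Rightarrow> complex)"
  assumes "bidual F" "compact (UNIV :: 'a set)" "dual_seq f"
    and "isCont (\<lambda>x. \<Sum>i. (cmod (F (hat_e i) x))\<^sup>2) x0"
  shows "(\<lambda>i. F (hat_e i) x0 * f i x0) sums F f x0"
proof -
  have "(\<lambda>M. F f x0 - F (seq_from M f) x0) \<longlonglongrightarrow> F f x0 - 0"
    by (intro tendsto_diff tendsto_const bidual_seq_from_tendsto_zero[OF assms])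
  moreover have "F f x0 - F (seq_from M f) x0 = (\<Sum>i<M. F (hat_e i) x0 * f i x0)" for M
    using bidual_split[OF assms(1,3), of x0 M] by simp
  ultimately show ?thesis unfolding sums_def by simp
qed

theorem lemma3p1:
  fixes F :: "(nat \<Rightarrow> 'a::t2_space \<Rightarrow> complex) \<Rightarrow> ('a \<Rightarrow> complex)"
    and \<Phi> :: "'a \<Rightarrow> real" and E :: "'a set"
  assumes "compact (UNIV :: 'a set)"
    and "bidual F"
    and "\<Phi> = (\<lambda>x. \<Sum>i. Re (cnj (rep_seq F i x) * rep_seq F i x))"
    and "E = {x. isCont \<Phi> x}"
  shows "\<forall>x0\<in>E. \<forall>f. dual_seq f \<longrightarrow>
           (\<lambda>i. cnj (rep_seq F i x0) * f i x0) sums (F f x0)"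
proof -
  have "\<Phi> = (\<lambda>x. \<Sum>i. (cmod (F (hat_e i) x))\<^sup>2)"
    unfolding assms(3) rep_seq_def by (simp add: complex_mult_cnj cmod_power2 mult.commute)
  then show ?thesis
    using bidual_sums[OF assms(2,1)] assms(4) by (simp add: rep_seq_def)
qed

end
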